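(* Let $\nu$ and $\nu'$ be centered distributions on $\mathbb{R}$ with $m_j(\nu)=m_j(\nu')$ for $j=1,\dots,\ell$. \begin{itemize} \item If $\nu$ and $\nu'$ are $\epsilon$-subgaussian with $\epsilon<1$, then $\chi^2(\nu*N(0,1)\,\|\,\nu'*N(0,1))\le O\Big(\frac{1}{\sqrt\ell}\frac{\epsilon^{2\ell+2}}{1-\epsilon^2}\Big)$. \item If $\nu$ and $\nu'$ are supported on $[-\epsilon,\epsilon]$ with $\epsilon<1$, then $\chi^2(\nu*N(0,1)\,\|\,\nu'*N(0,1))\le O\Big(\Big(\frac{e\epsilon^2}{\ell+1}\Big)^{\ell+1}\Big)$. \end{itemize}
   Context: $m_j(\pi)=\mathbb{E}_\pi X^j$. A distribution $\pi$ is $\epsilon$-subgaussian if $\mathbb{E}_\pi[e^{tX}]\le\exp(t^2\epsilon^2/2)$ for all $t\in\mathbb{R}$. $\chi^2(P\|Q)=\int (p-q)^2/q$ is the chi-squared divergence. $O(\cdot)$ hides an absolute constant. *)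

theory Defs
  imports "HOL-Probability.Probability"
begin

definition real_distribution :: "real measure \<Rightarrow> bool" where
  "real_distribution M \<longleftrightarrow> prob_space M \<and> sets M = sets borel"

definition moment :: "real measure \<Rightarrow> nat \<Rightarrow> real" where
  "moment M j = (\<integral>x. x ^ j \<partial>M)"

definition centered :: "real measure \<Rightarrow> bool" where
  "centered M \<longleftrightarrow> integrable M (\<lambda>x. x) \<and> (\<integral>x. x \<partial>M) = 0"

definition subgaussian :: "real measure \<Rightarrow> real \<Rightarrow> bool" where
  "subgaussian M \<epsilon> \<longleftrightarrow>
     (\<forall>t::real. integrable M (\<lambda>x. exp (t * x)) \<and>
        (\<integral>x. exp (t * x) \<partial>M) \<le> exp (t\<^sup>2 * \<epsilon>\<^sup>2 / 2))"

text \<open>Lebesgue density of the convolution pi * N(0,1).\<close>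
definition gauss_conv_density :: "real measure \<Rightarrow> real \<Rightarrow> real" where
  "gauss_conv_density M x = (\<integral>y. std_normal_density (x - y) \<partial>M)"

definition chi2 :: "(real \<Rightarrow> real) \<Rightarrow> (real \<Rightarrow> real) \<Rightarrow> ennreal" where
  "chi2 p q = (\<integral>\<^sup>+ x. ennreal ((p x - q x)\<^sup>2 / q x) \<partial>lborel)"

end

theory Submission
  imports Defs
begin

text \<open>The density of \<open>\<nu> * N(0,1)\<close> is \<open>\<phi>(x) R\<^sub>\<nu>(x)\<close> with \<open>R\<^sub>\<nu>(x) = E\<^sub>\<nu> exp (x Y - Y\<^sup>2/2)\<close>, and
  completing the square gives the Gaussian identity \<open>\<integral> \<phi> R\<^sub>\<nu> R\<^sub>\<nu>' = E exp (X X')\<close> for independent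
  \<open>X \<sim> \<nu>\<close>, \<open>X' \<sim> \<nu>'\<close>. Since \<open>\<nu>'\<close> is centered with small variance, \<open>R\<^sub>\<nu>' \<ge> 1/5\<close>, so
  \<open>\<chi>\<^sup>2 \<le> 5 \<integral> \<phi> (R\<^sub>\<nu> - R\<^sub>\<nu>')\<^sup>2\<close>, and the latter is a combination of three such expectations.
  Expanding \<open>exp\<close> in its Taylor series, the terms of order at most \<open>l\<close> cancel because the first
  \<open>l\<close> moments agree, and if \<open>E |X|\<^sup>j \<le> B\<^sub>j\<close> for both laws what is left is at most
  \<open>20 \<Sum>\<^sub>j\<^sub>>\<^sub>l B\<^sub>j\<^sup>2 / j!\<close>. It remains to sum this tail: \<open>B\<^sub>j = 2 (\<epsilon> \<surd>(j/e))\<^sup>j\<close> for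
  \<open>\<epsilon>\<close>-subgaussian laws, with \<open>j\<^sup>j / j! \<le> e\<^sup>j\<^sup>+\<^sup>1 / \<surd>j\<close>, and \<open>B\<^sub>j = \<epsilon>\<^sup>j\<close> on \<open>[-\<epsilon>, \<epsilon>]\<close>.\<close>

lemma exp_one_mult_le_exp: "exp 1 * y \<le> exp (y::real)"
proof -
  have "y \<le> exp (y - 1)" using exp_ge_add_one_self[of "y - 1"] by simp
  then have "exp 1 * y \<le> exp 1 * exp (y - 1)" by simp
  also have "\<dots> = exp y" by (simp add: exp_diff)
  finally show ?thesis .
qed

lemma power_le_exp_mult:
  fixes x t :: real
  assumes "0 \<le> x" "0 < t"
  shows "x ^ j \<le> (real j / (t * exp 1)) ^ j * exp (t * x)"
proof (cases "j = 0")
  case False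
  then have j: "real j > 0" by simp
  have "(exp 1 * (t * x / j)) ^ j \<le> exp (t * x / j) ^ j"
    using assms j by (intro power_mono exp_one_mult_le_exp) auto
  also have "\<dots> = exp (t * x)"
    using j by (simp add: exp_of_nat_mult[symmetric])
  finally have le: "(exp 1 * (t * x / j)) ^ j \<le> exp (t * x)" .
  have "x = (real j / (t * exp 1)) * (exp 1 * (t * x / real j))"
    using j assms(2) by (simp add: field_simps)
  then have "x ^ j = (real j / (t * exp 1)) ^ j * (exp 1 * (t * x / j)) ^ j"
    by (metis power_mult_distrib)
  also have "\<dots> \<le> (real j / (t * exp 1)) ^ j * exp (t * x)"
    using le assms by (intro mult_left_mono) auto
  finally show ?thesis .
qed (use assms in simp)

lemma power_self_over_fact_le_exp: "real n ^ n / fact n \<le> exp (real n)"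
proof -
  have s: "(\<lambda>k. real n ^ k / fact k) sums exp (real n)"
    using exp_converges[of "real n"] by (simp add: divide_inverse mult.commute)
  have "(\<Sum>k\<in>{n}. real n ^ k / fact k) \<le> (\<Sum>k. real n ^ k / fact k)"
    using s by (intro sum_le_suminf) (auto simp: sums_iff)
  then show ?thesis using s by (simp add: sums_iff)
qed

lemma fact_add_le_fact_mult_power: "fact (j + i) \<le> (fact j :: real) * real (j + i) ^ i"
proof (induction i)
  case (Suc i)
  have "fact (j + Suc i) = (fact (j + i) :: real) * real (j + Suc i)"
    by (simp add: algebra_simps)
  also have "\<dots> \<le> fact j * real (j + i) ^ i * real (j + Suc i)"
    using Suc by (intro mult_right_mono) auto
  also have "\<dots> \<le> fact j * real (j + Suc i) ^ i * real (j + Suc i)"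
    by (intro mult_right_mono mult_left_mono power_mono) auto
  finally show ?case by (simp add: mult_ac)
qed simp

lemma fact_mult_two_power_le: "1 \<le> n \<Longrightarrow> (fact n :: real) * 2 ^ i \<le> fact (i + n)"
proof (induction i)
  case (Suc i)
  have "(fact n :: real) * 2 ^ Suc i = 2 * (fact n * 2 ^ i)" by simp
  also have "\<dots> \<le> (real (i + n) + 1) * fact (i + n)"
    using Suc by (intro mult_mono) auto
  also have "\<dots> = fact (Suc i + n)" by simp
  finally show ?case .
qed simp

lemma power_self_over_fact_le_shift:
  assumes "real m ^ 2 \<le> real j" "i \<le> m" "1 \<le> j"
  shows "real j ^ j / fact j \<le> exp 1 * (real j ^ (j + i) / fact (j + i))"
proof -
  have j: "real j > 0" using assms(3) by simp
  have "(1 + real m / j) ^ i \<le> (1 + real m / j) ^ m"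
    using assms(2) by (intro power_increasing) auto
  also have "\<dots> \<le> exp (real m / j) ^ m"
    by (intro power_mono) (auto simp: exp_ge_add_one_self)
  also have "\<dots> = exp (real m ^ 2 / j)"
    by (simp add: exp_of_nat_mult[symmetric] power2_eq_square)
  also have "\<dots> \<le> exp 1" using assms(1) j by simp
  finally have growth: "(1 + real m / j) ^ i \<le> exp 1" .
  have "real j + real m = real j * (1 + real m / j)" using j by (simp add: field_simps)
  then have split: "(real j + real m) ^ i = real j ^ i * (1 + real m / j) ^ i"
    by (simp add: power_mult_distrib)
  have "fact (j + i) \<le> (fact j :: real) * real (j + i) ^ i"
    by (rule fact_add_le_fact_mult_power)
  also have "\<dots> \<le> fact j * (real j + real m) ^ i"
    using assms(2) by (intro mult_left_mono power_mono) auto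
  also have "\<dots> \<le> fact j * (real j ^ i * exp 1)"
    unfolding split using growth by (intro mult_left_mono) auto
  finally have "fact (j + i) \<le> exp 1 * real j ^ i * fact j" by (simp add: mult_ac)
  then have "fact (j + i) * real j ^ j \<le> exp 1 * real j ^ i * fact j * real j ^ j"
    by (rule mult_right_mono) simp
  then have "real j ^ j * fact (j + i) \<le> exp 1 * real j ^ (j + i) * fact j"
    by (simp add: power_add mult_ac)
  then show ?thesis
    by (simp add: divide_simps mult_ac)
qed

text \<open>The \<open>\<lfloor>\<surd>j\<rfloor> + 1\<close> terms \<open>j\<^sup>n / n!\<close>, \<open>j \<le> n \<le> j + \<lfloor>\<surd>j\<rfloor>\<close>, of the series of \<open>exp j\<close> are
  each at least \<open>j\<^sup>j / (e j!)\<close>, because \<open>(1 + m/j)\<^sup>m \<le> e\<close> for \<open>m\<^sup>2 \<le> j\<close>.\<close>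
lemma power_self_over_fact_le:
  assumes "1 \<le> j"
  shows "real j ^ j / fact j \<le> exp 1 * exp (real j) / sqrt (real j)"
proof -
  define m where "m = nat \<lfloor>sqrt (real j)\<rfloor>"
  define a where "a = real j ^ j / fact j"
  have m_floor: "real m = of_int \<lfloor>sqrt (real j)\<rfloor>"
    unfolding m_def by simp
  have m_le: "real m \<le> sqrt (real j)" and m_gt: "sqrt (real j) < real m + 1"
    unfolding m_floor by (rule of_int_floor_le, rule real_of_int_floor_add_one_gt)
  have "real m ^ 2 \<le> sqrt (real j) ^ 2" using m_le by (intro power_mono) auto
  then have m_sq: "real m ^ 2 \<le> real j" by simp
  have s: "(\<lambda>n. real j ^ n / fact n) sums exp (real j)"
    using exp_converges[of "real j"] by (simp add: divide_inverse mult.commute)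
  have "(real m + 1) * a = (\<Sum>i\<le>m. a)" by simp
  also have "\<dots> \<le> (\<Sum>i\<le>m. exp 1 * (real j ^ (j + i) / fact (j + i)))"
    unfolding a_def using power_self_over_fact_le_shift[OF m_sq _ assms] by (intro sum_mono) auto
  also have "\<dots> = exp 1 * (\<Sum>n\<in>{j..j+m}. real j ^ n / fact n)"
    using sum.shift_bounds_cl_nat_ivl[of "\<lambda>n. real j ^ n / fact n" 0 j m]
    by (simp add: sum_distrib_left atLeast0AtMost add.commute)
  also have "\<dots> \<le> exp 1 * (\<Sum>n. real j ^ n / fact n)"
    using s by (intro mult_left_mono sum_le_suminf) (auto simp: sums_iff)
  also have "\<dots> = exp 1 * exp (real j)"
    using s by (simp add: sums_iff)
  finally have "(real m + 1) * a \<le> exp 1 * exp (real j)" .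
  moreover have "sqrt (real j) * a \<le> (real m + 1) * a"
    using m_gt by (intro mult_right_mono) (auto simp: a_def)
  ultimately have "sqrt (real j) * a \<le> exp 1 * exp (real j)" by linarith
  then show ?thesis
    using assms unfolding a_def by (simp add: pos_le_divide_eq mult.commute)
qed

lemma abs_exp_minus_taylor_le:
  fixes z :: real
  shows "\<bar>exp z - (\<Sum>j\<le>l. z ^ j / fact j)\<bar> \<le> (\<Sum>i. \<bar>z\<bar> ^ (i + Suc l) / fact (i + Suc l))"
proof -
  have "(\<lambda>j. z ^ j / fact j) sums exp z"
    using exp_converges[of z] by (simp add: divide_inverse mult_ac)
  then have "(\<lambda>i. z ^ (i + Suc l) / fact (i + Suc l)) sums (exp z - (\<Sum>j<Suc l. z ^ j / fact j))"
    by (rule sums_split_initial_segment)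
  then have tail: "(\<lambda>i. z ^ (i + Suc l) / fact (i + Suc l)) sums (exp z - (\<Sum>j\<le>l. z ^ j / fact j))"
    by (simp only: lessThan_Suc_atMost)
  have abs_eq: "\<bar>z ^ n / fact n\<bar> = \<bar>z\<bar> ^ n / fact n" for n
    by (simp add: power_abs)
  have "(\<lambda>j. \<bar>z\<bar> ^ j / fact j) sums exp \<bar>z\<bar>"
    using exp_converges[of "\<bar>z\<bar>"] by (simp add: divide_inverse mult_ac)
  then have "summable (\<lambda>i. \<bar>z ^ (i + Suc l) / fact (i + Suc l)\<bar>)"
    unfolding abs_eq by (intro summable_ignore_initial_segment) (auto simp: sums_iff)
  then show ?thesis
    using summable_rabs[of "\<lambda>i. z ^ (i + Suc l) / fact (i + Suc l)"] tail
    unfolding abs_eq by (simp add: sums_iff)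
qed

lemma ennreal_abs_exp_mult_minus_taylor_le:
  fixes a b :: real
  shows "ennreal \<bar>exp (a * b) - (\<Sum>j\<le>l. (a * b) ^ j / fact j)\<bar>
     \<le> (\<Sum>i. ennreal (1 / fact (i + Suc l) * \<bar>a\<bar> ^ (i + Suc l) * \<bar>b\<bar> ^ (i + Suc l)))"
proof -
  have eq: "1 / fact n * \<bar>a\<bar> ^ n * \<bar>b\<bar> ^ n = \<bar>a * b\<bar> ^ n / fact n" for n
    by (simp add: abs_mult power_mult_distrib)
  have "(\<lambda>j. \<bar>a * b\<bar> ^ j / fact j) sums exp \<bar>a * b\<bar>"
    using exp_converges[of "\<bar>a * b\<bar>"] by (simp add: divide_inverse mult_ac)
  then have "summable (\<lambda>i. \<bar>a * b\<bar> ^ (i + Suc l) / fact (i + Suc l))"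
    by (intro summable_ignore_initial_segment) (auto simp: sums_iff)
  then show ?thesis
    unfolding eq using abs_exp_minus_taylor_le[of "a * b" l]
    by (subst suminf_ennreal2) (auto intro: ennreal_leI)
qed

lemma ennreal_exp_mult_le_suminf:
  fixes a b :: real
  shows "ennreal (exp (a * b)) \<le> (\<Sum>i. ennreal (1 / fact i * \<bar>a\<bar> ^ i * \<bar>b\<bar> ^ i))"
proof -
  have "(\<lambda>i. 1 / fact i * \<bar>a\<bar> ^ i * \<bar>b\<bar> ^ i) sums exp (\<bar>a\<bar> * \<bar>b\<bar>)"
    using exp_converges[of "\<bar>a\<bar> * \<bar>b\<bar>"] by (simp add: power_mult_distrib divide_inverse mult_ac)
  moreover have "exp (a * b) \<le> exp (\<bar>a\<bar> * \<bar>b\<bar>)"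
    by (simp add: abs_mult[symmetric])
  ultimately show ?thesis
    by (subst suminf_ennreal2) (auto simp: sums_iff intro: ennreal_leI)
qed

section \<open>The Gaussian likelihood ratio\<close>

lemma real_distributionD:
  assumes "real_distribution M"
  shows "prob_space M" "sets M = sets borel"
  using assms unfolding real_distribution_def by auto

lemma nn_integral_std_normal_mult_exp:
  "(\<integral>\<^sup>+x. ennreal (std_normal_density x * exp (x * s)) \<partial>lborel) = ennreal (exp (s\<^sup>2 / 2))"
proof -
  have "- (x\<^sup>2) / 2 + x * s = - ((x - s)\<^sup>2) / (2 * 1\<^sup>2) + s\<^sup>2 / 2" for x
    by (simp add: power2_eq_square field_simps)
  then have shift: "std_normal_density x * exp (x * s) = normal_density s 1 x * exp (s\<^sup>2 / 2)" for x
    unfolding std_normal_density_def normal_density_def by (simp add: exp_add[symmetric])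
  have "(\<integral>\<^sup>+x. ennreal (std_normal_density x * exp (x * s)) \<partial>lborel)
      = (\<integral>\<^sup>+x. ennreal (normal_density s 1 x) * ennreal (exp (s\<^sup>2 / 2)) \<partial>lborel)"
    unfolding shift by (simp add: ennreal_mult)
  also have "\<dots> = (\<integral>\<^sup>+x. ennreal (normal_density s 1 x) \<partial>lborel) * ennreal (exp (s\<^sup>2 / 2))"
    by (rule nn_integral_multc) simp
  also have "(\<integral>\<^sup>+x. ennreal (normal_density s 1 x) \<partial>lborel) = 1"
    by (subst nn_integral_eq_integral) auto
  finally show ?thesis by simp
qed

lemma nn_integral_std_normal_tilt_mult:
  "(\<integral>\<^sup>+x. ennreal (std_normal_density x * exp (x * a - a\<^sup>2 / 2) * exp (x * b - b\<^sup>2 / 2)) \<partial>lborel)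
     = ennreal (exp (a * b))"
proof -
  have "x * a - a\<^sup>2 / 2 + (x * b - b\<^sup>2 / 2) = x * (a + b) + (- (a\<^sup>2 / 2) - b\<^sup>2 / 2)" for x
    by (simp add: algebra_simps)
  then have eq: "std_normal_density x * exp (x * a - a\<^sup>2 / 2) * exp (x * b - b\<^sup>2 / 2)
      = std_normal_density x * exp (x * (a + b)) * exp (- (a\<^sup>2 / 2) - b\<^sup>2 / 2)" for x
    by (simp add: exp_add[symmetric] mult.assoc)
  have "(a + b)\<^sup>2 / 2 + (- (a\<^sup>2 / 2) - b\<^sup>2 / 2) = a * b"
    by (simp add: power2_eq_square algebra_simps)
  then have const: "exp ((a + b)\<^sup>2 / 2) * exp (- (a\<^sup>2 / 2) - b\<^sup>2 / 2) = exp (a * b)"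
    by (simp add: exp_add[symmetric])
  have "(\<integral>\<^sup>+x. ennreal (std_normal_density x * exp (x * a - a\<^sup>2 / 2) * exp (x * b - b\<^sup>2 / 2)) \<partial>lborel)
      = (\<integral>\<^sup>+x. ennreal (std_normal_density x * exp (x * (a + b)))
           * ennreal (exp (- (a\<^sup>2 / 2) - b\<^sup>2 / 2)) \<partial>lborel)"
    unfolding eq by (simp add: ennreal_mult)
  also have "\<dots> = (\<integral>\<^sup>+x. ennreal (std_normal_density x * exp (x * (a + b))) \<partial>lborel)
      * ennreal (exp (- (a\<^sup>2 / 2) - b\<^sup>2 / 2))"
    by (rule nn_integral_multc) simp
  also have "\<dots> = ennreal (exp (a * b))"
    unfolding nn_integral_std_normal_mult_exp const[symmetric] by (simp add: ennreal_mult)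
  finally show ?thesis .
qed

text \<open>The likelihood ratio of \<open>M * N(0,1)\<close> with respect to \<open>N(0,1)\<close>.\<close>
definition gauss_conv_ratio :: "real measure \<Rightarrow> real \<Rightarrow> real" where
  "gauss_conv_ratio M x = (\<integral>y. exp (x * y - y\<^sup>2 / 2) \<partial>M)"

lemma gauss_conv_density_eq_ratio:
  "gauss_conv_density M x = std_normal_density x * gauss_conv_ratio M x"
proof -
  have "- ((x - y)\<^sup>2) / 2 = - (x\<^sup>2) / 2 + (x * y - y\<^sup>2 / 2)" for y
    by (simp add: power2_eq_square field_simps)
  then have "std_normal_density (x - y) = std_normal_density x * exp (x * y - y\<^sup>2 / 2)" for y
    unfolding std_normal_density_def by (simp add: exp_add[symmetric])
  then show ?thesis
    unfolding gauss_conv_density_def gauss_conv_ratio_def by simp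
qed

lemma gauss_conv_ratio_nonneg: "0 \<le> gauss_conv_ratio M x"
  unfolding gauss_conv_ratio_def by simp

lemma integrable_exp_gauss_tilt:
  assumes "real_distribution M"
  shows "integrable M (\<lambda>y. exp (x * y - y\<^sup>2 / 2))"
proof -
  interpret prob_space M using real_distributionD[OF assms] by simp
  note [measurable_cong] = real_distributionD(2)[OF assms]
  have "x * y - y\<^sup>2 / 2 \<le> x\<^sup>2 / 2" for y
    using zero_le_power2[of "x - y"] by (simp add: power2_eq_square field_simps)
  then show ?thesis
    by (intro integrable_const_bound[where B = "exp (x\<^sup>2 / 2)"]) auto
qed

lemma ennreal_mult_gauss_conv_ratio:
  assumes "real_distribution M" "0 \<le> c"
  shows "ennreal (c * gauss_conv_ratio M x) = (\<integral>\<^sup>+y. ennreal (c * exp (x * y - y\<^sup>2 / 2)) \<partial>M)"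
  using integrable_exp_gauss_tilt[OF assms(1)] assms(2)
  by (subst nn_integral_eq_integral) (auto simp: gauss_conv_ratio_def)

text \<open>From \<open>exp u \<ge> 1 + u\<close> and \<open>E Y = 0\<close>.\<close>
lemma gauss_conv_ratio_ge:
  assumes "real_distribution M" "centered M" "integrable M (\<lambda>y. y\<^sup>2)"
  shows "1 - (\<integral>y. y\<^sup>2 \<partial>M) / 2 \<le> gauss_conv_ratio M x"
proof -
  interpret prob_space M using real_distributionD[OF assms(1)] by simp
  have mean: "integrable M (\<lambda>y. y)" "(\<integral>y. y \<partial>M) = 0"
    using assms(2) unfolding centered_def by auto
  have "1 - (\<integral>y. y\<^sup>2 \<partial>M) / 2 = (\<integral>y. 1 + x * y - y\<^sup>2 / 2 \<partial>M)"
    using mean assms(3) by (simp add: prob_space)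
  also have "\<dots> \<le> gauss_conv_ratio M x"
    unfolding gauss_conv_ratio_def using mean(1) assms(3)
    by (intro integral_mono integrable_exp_gauss_tilt[OF assms(1)])
       (auto intro: order.trans[OF _ exp_ge_add_one_self])
  finally show ?thesis .
qed

lemma nn_integral_std_normal_ratio_mult:
  assumes M1: "real_distribution M1" and M2: "real_distribution M2"
  shows "(\<integral>\<^sup>+x. ennreal (std_normal_density x * gauss_conv_ratio M1 x * gauss_conv_ratio M2 x) \<partial>lborel)
       = (\<integral>\<^sup>+a. (\<integral>\<^sup>+b. ennreal (exp (a * b)) \<partial>M2) \<partial>M1)"
proof -
  interpret M1: prob_space M1 using real_distributionD[OF M1] by simp
  interpret M2: prob_space M2 using real_distributionD[OF M2] by simp
  note [measurable_cong] = real_distributionD(2)[OF M1] real_distributionD(2)[OF M2]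
  define f where "f x a b = std_normal_density x * exp (x * a - a\<^sup>2 / 2) * exp (x * b - b\<^sup>2 / 2)"
    for x a b :: real
  have pointwise: "ennreal (std_normal_density x * gauss_conv_ratio M1 x * gauss_conv_ratio M2 x)
      = (\<integral>\<^sup>+a. (\<integral>\<^sup>+b. ennreal (f x a b) \<partial>M2) \<partial>M1)" for x
  proof -
    have "ennreal (std_normal_density x * gauss_conv_ratio M1 x * gauss_conv_ratio M2 x)
        = (\<integral>\<^sup>+a. ennreal (std_normal_density x * gauss_conv_ratio M2 x * exp (x * a - a\<^sup>2 / 2)) \<partial>M1)"
      using ennreal_mult_gauss_conv_ratio[OF M1, of "std_normal_density x * gauss_conv_ratio M2 x"]
      by (simp add: gauss_conv_ratio_nonneg mult_ac)
    also have "\<dots> = (\<integral>\<^sup>+a. (\<integral>\<^sup>+b. ennreal (f x a b) \<partial>M2) \<partial>M1)"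
      using ennreal_mult_gauss_conv_ratio[OF M2, of "std_normal_density x * exp (x * _ - _\<^sup>2 / 2)"]
      by (intro nn_integral_cong) (simp add: f_def mult_ac)
    finally show ?thesis .
  qed
  have [measurable]: "(\<lambda>(a, x). \<integral>\<^sup>+b. ennreal (f x a b) \<partial>M2) \<in> borel_measurable (M1 \<Otimes>\<^sub>M lborel)"
    "(\<lambda>(b, x). ennreal (f x a b)) \<in> borel_measurable (M2 \<Otimes>\<^sub>M lborel)" for a
    unfolding f_def by measurable
  have pair: "pair_sigma_finite M lborel" if "prob_space M" for M
    using that by (simp add: pair_sigma_finite.intro prob_space_imp_sigma_finite
        lborel.sigma_finite_measure_axioms)
  have "(\<integral>\<^sup>+x. ennreal (std_normal_density x * gauss_conv_ratio M1 x * gauss_conv_ratio M2 x) \<partial>lborel)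
      = (\<integral>\<^sup>+a. (\<integral>\<^sup>+x. (\<integral>\<^sup>+b. ennreal (f x a b) \<partial>M2) \<partial>lborel) \<partial>M1)"
    unfolding pointwise by (rule pair_sigma_finite.Fubini'[OF pair]) (simp_all add: M1.prob_space_axioms)
  also have "\<dots> = (\<integral>\<^sup>+a. (\<integral>\<^sup>+b. (\<integral>\<^sup>+x. ennreal (f x a b) \<partial>lborel) \<partial>M2) \<partial>M1)"
    by (intro nn_integral_cong pair_sigma_finite.Fubini'[OF pair]) (simp_all add: M2.prob_space_axioms)
  also have "\<dots> = (\<integral>\<^sup>+a. (\<integral>\<^sup>+b. ennreal (exp (a * b)) \<partial>M2) \<partial>M1)"
    unfolding f_def nn_integral_std_normal_tilt_mult ..
  finally show ?thesis .
qed

section \<open>Moment bounds and the exponential series\<close>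

definition abs_moments_le :: "real measure \<Rightarrow> (nat \<Rightarrow> real) \<Rightarrow> bool" where
  "abs_moments_le M B \<longleftrightarrow> (\<forall>j. 0 \<le> B j \<and> (\<integral>\<^sup>+x. ennreal (\<bar>x\<bar> ^ j) \<partial>M) \<le> ennreal (B j))"

lemma abs_moments_leD:
  assumes "abs_moments_le M B"
  shows "0 \<le> B j" "(\<integral>\<^sup>+x. ennreal (\<bar>x\<bar> ^ j) \<partial>M) \<le> ennreal (B j)"
  using assms unfolding abs_moments_le_def by auto

lemma abs_moments_le_integrable:
  assumes M: "real_distribution M" and B: "abs_moments_le M B"
  shows "integrable M (\<lambda>x. x ^ j)" "integrable M (\<lambda>x. \<bar>x\<bar> ^ j)" "(\<integral>x. \<bar>x\<bar> ^ j \<partial>M) \<le> B j"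
proof -
  have fin: "(\<integral>\<^sup>+x. ennreal (\<bar>x\<bar> ^ j) \<partial>M) < \<infinity>"
    by (rule le_less_trans[OF abs_moments_leD(2)[OF B]]) simp
  have meas: "(\<lambda>x. x ^ j) \<in> borel_measurable M" "(\<lambda>x. \<bar>x\<bar> ^ j) \<in> borel_measurable M"
    unfolding measurable_cong_sets[OF real_distributionD(2)[OF M] refl] by simp_all
  show int: "integrable M (\<lambda>x. x ^ j)" "integrable M (\<lambda>x. \<bar>x\<bar> ^ j)"
    by (rule integrableI_bounded[OF meas(1)], use fin in \<open>simp add: power_abs\<close>)
       (rule integrableI_bounded[OF meas(2)], use fin in simp)
  have "ennreal (\<integral>x. \<bar>x\<bar> ^ j \<partial>M) = (\<integral>\<^sup>+x. ennreal (\<bar>x\<bar> ^ j) \<partial>M)"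
    using int(2) by (intro nn_integral_eq_integral[symmetric]) auto
  then have "ennreal (\<integral>x. \<bar>x\<bar> ^ j \<partial>M) \<le> ennreal (B j)"
    using abs_moments_leD(2)[OF B, of j] by simp
  then show "(\<integral>x. \<bar>x\<bar> ^ j \<partial>M) \<le> B j"
    using ennreal_le_iff[OF abs_moments_leD(1)[OF B, of j]] by simp
qed

lemma nn_integral_suminf_mult_abs_power:
  fixes c :: "nat \<Rightarrow> ennreal"
  assumes "sets M = sets borel"
  shows "(\<integral>\<^sup>+y. (\<Sum>i. c i * ennreal (\<bar>y\<bar> ^ e i)) \<partial>M)
       = (\<Sum>i. c i * (\<integral>\<^sup>+y. ennreal (\<bar>y\<bar> ^ e i) \<partial>M))"
proof -
  note [measurable_cong] = assms
  have "(\<integral>\<^sup>+y. (\<Sum>i. c i * ennreal (\<bar>y\<bar> ^ e i)) \<partial>M) = (\<Sum>i. \<integral>\<^sup>+y. c i * ennreal (\<bar>y\<bar> ^ e i) \<partial>M)"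
    by (rule nn_integral_suminf) measurable
  also have "\<dots> = (\<Sum>i. c i * (\<integral>\<^sup>+y. ennreal (\<bar>y\<bar> ^ e i) \<partial>M))"
    by (rule suminf_cong, rule nn_integral_cmult) measurable
  finally show ?thesis .
qed

lemma nn_integral_pair_suminf_mult_abs_power:
  assumes "sets M1 = sets borel" "sets M2 = sets borel" "\<And>i. 0 \<le> c i"
  shows "(\<integral>\<^sup>+a. (\<integral>\<^sup>+b. (\<Sum>i. ennreal (c i * \<bar>a\<bar> ^ e i * \<bar>b\<bar> ^ e i)) \<partial>M2) \<partial>M1)
       = (\<Sum>i. ennreal (c i) * (\<integral>\<^sup>+b. ennreal (\<bar>b\<bar> ^ e i) \<partial>M2) * (\<integral>\<^sup>+a. ennreal (\<bar>a\<bar> ^ e i) \<partial>M1))"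
proof -
  have split_b: "ennreal (c i * \<bar>a\<bar> ^ e i * \<bar>b\<bar> ^ e i)
      = ennreal (c i * \<bar>a\<bar> ^ e i) * ennreal (\<bar>b\<bar> ^ e i)" for i a b
    using assms(3) by (simp add: ennreal_mult)
  have split_a: "ennreal (c i * \<bar>a\<bar> ^ e i) * X = (ennreal (c i) * X) * ennreal (\<bar>a\<bar> ^ e i)" for i a X
    using assms(3) by (simp add: ennreal_mult mult_ac)
  have "(\<integral>\<^sup>+a. (\<integral>\<^sup>+b. (\<Sum>i. ennreal (c i * \<bar>a\<bar> ^ e i * \<bar>b\<bar> ^ e i)) \<partial>M2) \<partial>M1)
     = (\<integral>\<^sup>+a. (\<Sum>i. ennreal (c i * \<bar>a\<bar> ^ e i) * (\<integral>\<^sup>+b. ennreal (\<bar>b\<bar> ^ e i) \<partial>M2)) \<partial>M1)"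
    unfolding split_b by (simp only: nn_integral_suminf_mult_abs_power[OF assms(2)])
  also have "\<dots> = (\<integral>\<^sup>+a. (\<Sum>i. (ennreal (c i) * (\<integral>\<^sup>+b. ennreal (\<bar>b\<bar> ^ e i) \<partial>M2))
      * ennreal (\<bar>a\<bar> ^ e i)) \<partial>M1)"
    unfolding split_a ..
  also have "\<dots> = (\<Sum>i. ennreal (c i) * (\<integral>\<^sup>+b. ennreal (\<bar>b\<bar> ^ e i) \<partial>M2)
      * (\<integral>\<^sup>+a. ennreal (\<bar>a\<bar> ^ e i) \<partial>M1))"
    by (rule nn_integral_suminf_mult_abs_power[OF assms(1)])
  finally show ?thesis .
qed

lemma suminf_ennreal_mult_le:
  fixes I1 I2 :: "nat \<Rightarrow> ennreal"
  assumes "\<And>i. 0 \<le> c i" "\<And>i. 0 \<le> B i" "\<And>i. I1 i \<le> ennreal (B i)" "\<And>i. I2 i \<le> ennreal (B i)"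
    "summable (\<lambda>i. c i * B i ^ 2)"
  shows "(\<Sum>i. ennreal (c i) * I2 i * I1 i) \<le> ennreal (\<Sum>i. c i * B i ^ 2)"
proof -
  have "ennreal (c i) * I2 i * I1 i \<le> ennreal (c i * B i ^ 2)" for i
  proof -
    have "ennreal (c i) * I2 i * I1 i \<le> ennreal (c i) * ennreal (B i) * ennreal (B i)"
      using assms by (intro mult_mono) auto
    also have "\<dots> = ennreal (c i * B i ^ 2)"
      using assms by (simp add: ennreal_mult power2_eq_square mult_ac)
    finally show ?thesis .
  qed
  then have "(\<Sum>i. ennreal (c i) * I2 i * I1 i) \<le> (\<Sum>i. ennreal (c i * B i ^ 2))"
    by (intro suminf_le summableI)
  also have "\<dots> = ennreal (\<Sum>i. c i * B i ^ 2)"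
    using assms by (intro suminf_ennreal2) auto
  finally show ?thesis .
qed

text \<open>AM-GM: \<open>|a|\<^sup>i B\<^sub>i \<le> (a\<^sup>2)\<^sup>i + B\<^sub>i\<^sup>2\<close>.\<close>
lemma summable_abs_power_mult_over_fact:
  fixes a :: real and B :: "nat \<Rightarrow> real"
  assumes "\<And>i. 0 \<le> B i" "summable (\<lambda>i. B i ^ 2 / fact i)"
  shows "summable (\<lambda>i. 1 / fact i * \<bar>a\<bar> ^ i * B i)"
proof (rule summable_comparison_test)
  have "summable (\<lambda>i. (a\<^sup>2) ^ i / fact i)"
    using exp_converges[of "a\<^sup>2"] by (simp add: sums_iff divide_inverse mult.commute)
  then show "summable (\<lambda>i. (a\<^sup>2) ^ i / fact i + B i ^ 2 / fact i)"
    using assms(2) by (rule summable_add)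
  have "\<bar>a\<bar> ^ i * B i \<le> (a\<^sup>2) ^ i + B i ^ 2" for i
  proof -
    have "(\<bar>a\<bar> ^ i)\<^sup>2 = (a\<^sup>2) ^ i"
      by (simp add: power_even_abs power_mult[symmetric] mult.commute)
    moreover have "0 \<le> (\<bar>a\<bar> ^ i - B i)\<^sup>2" "0 \<le> \<bar>a\<bar> ^ i * B i"
      using assms(1) by simp_all
    ultimately show ?thesis by (simp add: power2_eq_square algebra_simps)
  qed
  then have "\<bar>a\<bar> ^ i * B i / fact i \<le> ((a\<^sup>2) ^ i + B i ^ 2) / fact i" for i
    by (intro divide_right_mono) auto
  then have "norm (1 / fact i * \<bar>a\<bar> ^ i * B i) \<le> (a\<^sup>2) ^ i / fact i + B i ^ 2 / fact i" for i
    using assms(1)[of i] by (simp add: add_divide_distrib)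
  then show "\<exists>N. \<forall>n\<ge>N. norm (1 / fact n * \<bar>a\<bar> ^ n * B n) \<le> (a\<^sup>2) ^ n / fact n + B n ^ 2 / fact n"
    by blast
qed

lemma integrable_exp_mult:
  assumes M: "real_distribution M" and B: "abs_moments_le M B"
    and sum: "summable (\<lambda>j. B j ^ 2 / fact j)"
  shows "integrable M (\<lambda>y. exp (a * y))"
proof -
  have "(\<integral>\<^sup>+y. ennreal (exp (a * y)) \<partial>M) \<le> (\<integral>\<^sup>+y. (\<Sum>i. ennreal (1 / fact i * \<bar>a\<bar> ^ i * \<bar>y\<bar> ^ i)) \<partial>M)"
    by (intro nn_integral_mono ennreal_exp_mult_le_suminf)
  also have "\<dots> = (\<integral>\<^sup>+y. (\<Sum>i. ennreal (1 / fact i * \<bar>a\<bar> ^ i) * ennreal (\<bar>y\<bar> ^ i)) \<partial>M)"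
    by (intro nn_integral_cong suminf_cong) (simp add: ennreal_mult[symmetric])
  also have "\<dots> = (\<Sum>i. ennreal (1 / fact i * \<bar>a\<bar> ^ i) * (\<integral>\<^sup>+y. ennreal (\<bar>y\<bar> ^ i) \<partial>M))"
    by (rule nn_integral_suminf_mult_abs_power[OF real_distributionD(2)[OF M], where e = "\<lambda>i. i"])
  also have "\<dots> \<le> (\<Sum>i. ennreal (1 / fact i * \<bar>a\<bar> ^ i * B i))"
  proof (intro suminf_le summableI)
    fix i
    have "ennreal (1 / fact i * \<bar>a\<bar> ^ i) * (\<integral>\<^sup>+y. ennreal (\<bar>y\<bar> ^ i) \<partial>M)
        \<le> ennreal (1 / fact i * \<bar>a\<bar> ^ i) * ennreal (B i)"
      using abs_moments_leD(2)[OF B] by (intro mult_left_mono) auto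
    also have "\<dots> = ennreal (1 / fact i * \<bar>a\<bar> ^ i * B i)"
      using abs_moments_leD(1)[OF B] by (intro ennreal_mult[symmetric]) auto
    finally show "ennreal (1 / fact i * \<bar>a\<bar> ^ i) * (\<integral>\<^sup>+y. ennreal (\<bar>y\<bar> ^ i) \<partial>M)
        \<le> ennreal (1 / fact i * \<bar>a\<bar> ^ i * B i)" .
  qed
  also have "\<dots> = ennreal (\<Sum>i. 1 / fact i * \<bar>a\<bar> ^ i * B i)"
    using summable_abs_power_mult_over_fact[OF abs_moments_leD(1)[OF B] sum]
    by (intro suminf_ennreal2) (auto simp: abs_moments_leD(1)[OF B])
  finally have fin: "(\<integral>\<^sup>+y. ennreal (norm (exp (a * y))) \<partial>M) < \<infinity>"
    by (simp add: le_less_trans)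
  have "(\<lambda>y. exp (a * y)) \<in> borel_measurable M"
    unfolding measurable_cong_sets[OF real_distributionD(2)[OF M] refl] by measurable
  then show ?thesis
    using fin by (rule integrableI_bounded)
qed

lemma nn_integral_exp_mult_le:
  assumes M1: "real_distribution M1" and M2: "real_distribution M2"
    and B1: "abs_moments_le M1 B" and B2: "abs_moments_le M2 B"
    and sum: "summable (\<lambda>j. B j ^ 2 / fact j)"
  shows "(\<integral>\<^sup>+a. (\<integral>\<^sup>+b. ennreal (exp (a * b)) \<partial>M2) \<partial>M1) \<le> ennreal (\<Sum>i. B i ^ 2 / fact i)"
proof -
  have "(\<integral>\<^sup>+a. (\<integral>\<^sup>+b. ennreal (exp (a * b)) \<partial>M2) \<partial>M1)
      \<le> (\<integral>\<^sup>+a. (\<integral>\<^sup>+b. (\<Sum>i. ennreal (1 / fact i * \<bar>a\<bar> ^ i * \<bar>b\<bar> ^ i)) \<partial>M2) \<partial>M1)"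
    by (intro nn_integral_mono ennreal_exp_mult_le_suminf)
  also have "\<dots> = (\<Sum>i. ennreal (1 / fact i) * (\<integral>\<^sup>+b. ennreal (\<bar>b\<bar> ^ i) \<partial>M2)
      * (\<integral>\<^sup>+a. ennreal (\<bar>a\<bar> ^ i) \<partial>M1))"
    by (rule nn_integral_pair_suminf_mult_abs_power[OF real_distributionD(2)[OF M1]
          real_distributionD(2)[OF M2], of "\<lambda>i. 1 / fact i" "\<lambda>i. i"]) simp
  also have "\<dots> \<le> ennreal (\<Sum>i. 1 / fact i * B i ^ 2)"
    using abs_moments_leD[OF B1] abs_moments_leD[OF B2] sum
    by (intro suminf_ennreal_mult_le) simp_all
  finally show ?thesis by simp
qed

lemma integrable_integral_exp_mult:
  assumes M1: "real_distribution M1" and M2: "real_distribution M2"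
    and B1: "abs_moments_le M1 B" and B2: "abs_moments_le M2 B"
    and sum: "summable (\<lambda>j. B j ^ 2 / fact j)"
  shows "integrable M1 (\<lambda>a. \<integral>b. exp (a * b) \<partial>M2)"
    and "(\<integral>\<^sup>+a. (\<integral>\<^sup>+b. ennreal (exp (a * b)) \<partial>M2) \<partial>M1) = ennreal (\<integral>a. (\<integral>b. exp (a * b) \<partial>M2) \<partial>M1)"
proof -
  interpret M2: prob_space M2 using real_distributionD[OF M2] by simp
  note [measurable_cong] = real_distributionD(2)[OF M1] real_distributionD(2)[OF M2]
  have inner: "(\<integral>\<^sup>+b. ennreal (exp (a * b)) \<partial>M2) = ennreal (\<integral>b. exp (a * b) \<partial>M2)" for a
    using integrable_exp_mult[OF M2 B2 sum] by (intro nn_integral_eq_integral) auto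
  have meas: "(\<lambda>a. \<integral>b. exp (a * b) \<partial>M2) \<in> borel_measurable M1"
    by measurable
  have "(\<integral>\<^sup>+a. ennreal (norm (\<integral>b. exp (a * b) \<partial>M2)) \<partial>M1)
      = (\<integral>\<^sup>+a. (\<integral>\<^sup>+b. ennreal (exp (a * b)) \<partial>M2) \<partial>M1)"
    unfolding inner by simp
  also have "\<dots> < \<infinity>"
    by (rule le_less_trans[OF nn_integral_exp_mult_le[OF M1 M2 B1 B2 sum]]) simp
  finally show int: "integrable M1 (\<lambda>a. \<integral>b. exp (a * b) \<partial>M2)"
    by (rule integrableI_bounded[OF meas])
  show "(\<integral>\<^sup>+a. (\<integral>\<^sup>+b. ennreal (exp (a * b)) \<partial>M2) \<partial>M1) = ennreal (\<integral>a. (\<integral>b. exp (a * b) \<partial>M2) \<partial>M1)"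
    unfolding inner using int by (intro nn_integral_eq_integral) auto
qed

lemma integral_exp_taylor_mult:
  fixes l :: nat
  assumes M1: "real_distribution M1" and M2: "real_distribution M2"
    and B1: "abs_moments_le M1 B" and B2: "abs_moments_le M2 B"
  defines "T \<equiv> \<lambda>a b. \<Sum>j\<le>l. (a * b) ^ j / fact j"
  shows "integrable M2 (T a)" "integrable M1 (\<lambda>a. \<integral>b. T a b \<partial>M2)"
    and "(\<integral>a. (\<integral>b. T a b \<partial>M2) \<partial>M1) = (\<Sum>j\<le>l. moment M1 j * moment M2 j / fact j)"
proof -
  note pow1 = abs_moments_le_integrable(1)[OF M1 B1]
  note pow2 = abs_moments_le_integrable(1)[OF M2 B2]
  have expand: "T a b = (\<Sum>j\<le>l. a ^ j / fact j * b ^ j)" for a b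
    unfolding T_def by (simp add: power_mult_distrib)
  show "integrable M2 (T a)"
    unfolding expand using pow2 by simp
  have inner: "(\<integral>b. T a b \<partial>M2) = (\<Sum>j\<le>l. moment M2 j / fact j * a ^ j)" for a
    unfolding expand moment_def using pow2 by (simp add: Bochner_Integration.integral_sum mult.commute)
  show "integrable M1 (\<lambda>a. \<integral>b. T a b \<partial>M2)"
    unfolding inner using pow1 by simp
  show "(\<integral>a. (\<integral>b. T a b \<partial>M2) \<partial>M1) = (\<Sum>j\<le>l. moment M1 j * moment M2 j / fact j)"
    unfolding inner using pow1 by (simp add: Bochner_Integration.integral_sum moment_def mult.commute)
qed

lemma nn_integral_abs_exp_mult_minus_taylor_le:
  assumes M1: "real_distribution M1" and M2: "real_distribution M2"
    and B1: "abs_moments_le M1 B" and B2: "abs_moments_le M2 B"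
    and sum: "summable (\<lambda>j. B j ^ 2 / fact j)"
  shows "(\<integral>\<^sup>+a. (\<integral>\<^sup>+b. ennreal \<bar>exp (a * b) - (\<Sum>j\<le>l. (a * b) ^ j / fact j)\<bar> \<partial>M2) \<partial>M1)
      \<le> ennreal (\<Sum>i. B (i + Suc l) ^ 2 / fact (i + Suc l))"
proof -
  have tail_sum: "summable (\<lambda>i. 1 / fact (i + Suc l) * B (i + Suc l) ^ 2)"
    using summable_ignore_initial_segment[OF sum, of "Suc l"] by simp
  have "(\<integral>\<^sup>+a. (\<integral>\<^sup>+b. ennreal \<bar>exp (a * b) - (\<Sum>j\<le>l. (a * b) ^ j / fact j)\<bar> \<partial>M2) \<partial>M1)
      \<le> (\<integral>\<^sup>+a. (\<integral>\<^sup>+b.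
        (\<Sum>i. ennreal (1 / fact (i + Suc l) * \<bar>a\<bar> ^ (i + Suc l) * \<bar>b\<bar> ^ (i + Suc l))) \<partial>M2) \<partial>M1)"
    by (intro nn_integral_mono ennreal_abs_exp_mult_minus_taylor_le)
  also have "\<dots> = (\<Sum>i. ennreal (1 / fact (i + Suc l)) * (\<integral>\<^sup>+b. ennreal (\<bar>b\<bar> ^ (i + Suc l)) \<partial>M2)
      * (\<integral>\<^sup>+a. ennreal (\<bar>a\<bar> ^ (i + Suc l)) \<partial>M1))"
    by (rule nn_integral_pair_suminf_mult_abs_power[OF real_distributionD(2)[OF M1]
          real_distributionD(2)[OF M2], of "\<lambda>i. 1 / fact (i + Suc l)" "\<lambda>i. i + Suc l"]) simp
  also have "\<dots> \<le> ennreal (\<Sum>i. 1 / fact (i + Suc l) * B (i + Suc l) ^ 2)"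
    by (rule suminf_ennreal_mult_le[where B = "\<lambda>i. B (i + Suc l)"])
       (simp, rule abs_moments_leD(1)[OF B1], rule abs_moments_leD(2)[OF B1],
        rule abs_moments_leD(2)[OF B2], rule tail_sum)
  finally show ?thesis by simp
qed

lemma abs_integral_exp_mult_minus_moments_le:
  assumes M1: "real_distribution M1" and M2: "real_distribution M2"
    and B1: "abs_moments_le M1 B" and B2: "abs_moments_le M2 B"
    and sum: "summable (\<lambda>j. B j ^ 2 / fact j)"
  shows "\<bar>(\<integral>a. (\<integral>b. exp (a * b) \<partial>M2) \<partial>M1) - (\<Sum>j\<le>l. moment M1 j * moment M2 j / fact j)\<bar>
           \<le> (\<Sum>i. B (i + Suc l) ^ 2 / fact (i + Suc l))"
proof -
  define T where "T a b = (\<Sum>j\<le>l. (a * b) ^ j / fact j)" for a b :: real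
  define R where "R a b = exp (a * b) - T a b" for a b
  note T = integral_exp_taylor_mult[OF M1 M2 B1 B2, where l = l, folded T_def]
  note E = integrable_integral_exp_mult[OF M1 M2 B1 B2 sum]
  have R_int: "integrable M2 (R a)" for a
    unfolding R_def using integrable_exp_mult[OF M2 B2 sum] T(1) by simp
  have R_inner: "(\<integral>b. R a b \<partial>M2) = (\<integral>b. exp (a * b) \<partial>M2) - (\<integral>b. T a b \<partial>M2)" for a
    unfolding R_def using integrable_exp_mult[OF M2 B2 sum] T(1) by simp
  have R_outer: "integrable M1 (\<lambda>a. \<integral>b. R a b \<partial>M2)"
    unfolding R_inner using E(1) T(2) by simp
  have diff: "(\<integral>a. (\<integral>b. exp (a * b) \<partial>M2) \<partial>M1) - (\<Sum>j\<le>l. moment M1 j * moment M2 j / fact j)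
      = (\<integral>a. (\<integral>b. R a b \<partial>M2) \<partial>M1)"
    unfolding T(3)[symmetric] R_inner using E(1) T(2) by simp
  have "ennreal \<bar>\<integral>a. (\<integral>b. R a b \<partial>M2) \<partial>M1\<bar> \<le> (\<integral>\<^sup>+a. ennreal \<bar>\<integral>b. R a b \<partial>M2\<bar> \<partial>M1)"
    using integral_norm_bound_ennreal[OF R_outer] by simp
  also have "\<dots> \<le> (\<integral>\<^sup>+a. (\<integral>\<^sup>+b. ennreal \<bar>R a b\<bar> \<partial>M2) \<partial>M1)"
    using integral_norm_bound_ennreal[OF R_int] by (intro nn_integral_mono) simp
  also have "\<dots> \<le> ennreal (\<Sum>i. B (i + Suc l) ^ 2 / fact (i + Suc l))"
    unfolding R_def T_def by (rule nn_integral_abs_exp_mult_minus_taylor_le[OF M1 M2 B1 B2 sum])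
  finally have "ennreal \<bar>\<integral>a. (\<integral>b. R a b \<partial>M2) \<partial>M1\<bar>
      \<le> ennreal (\<Sum>i. B (i + Suc l) ^ 2 / fact (i + Suc l))" .
  moreover have "0 \<le> (\<Sum>i. B (i + Suc l) ^ 2 / fact (i + Suc l))"
    using summable_ignore_initial_segment[OF sum, of "Suc l"] by (rule suminf_nonneg) simp
  ultimately show ?thesis
    unfolding diff by (simp add: ennreal_le_iff)
qed

section \<open>The chi-squared bound\<close>

lemma integral_std_normal_ratio_mult:
  assumes M1: "real_distribution M1" and M2: "real_distribution M2"
    and B1: "abs_moments_le M1 B" and B2: "abs_moments_le M2 B"
    and sum: "summable (\<lambda>j. B j ^ 2 / fact j)"
  shows "integrable lborel (\<lambda>x. std_normal_density x * gauss_conv_ratio M1 x * gauss_conv_ratio M2 x)"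
    and "(\<integral>x. std_normal_density x * gauss_conv_ratio M1 x * gauss_conv_ratio M2 x \<partial>lborel)
       = (\<integral>a. (\<integral>b. exp (a * b) \<partial>M2) \<partial>M1)"
proof -
  interpret M1: prob_space M1 using real_distributionD[OF M1] by simp
  interpret M2: prob_space M2 using real_distributionD[OF M2] by simp
  note [measurable_cong] = real_distributionD(2)[OF M1] real_distributionD(2)[OF M2]
  define f where "f = (\<lambda>x. std_normal_density x * gauss_conv_ratio M1 x * gauss_conv_ratio M2 x)"
  have f_nonneg: "0 \<le> f x" for x
    unfolding f_def by (simp add: gauss_conv_ratio_nonneg)
  have meas: "f \<in> borel_measurable lborel"
    unfolding f_def gauss_conv_ratio_def by measurable
  have nn: "(\<integral>\<^sup>+x. ennreal (f x) \<partial>lborel) = ennreal (\<integral>a. (\<integral>b. exp (a * b) \<partial>M2) \<partial>M1)"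
    unfolding f_def nn_integral_std_normal_ratio_mult[OF M1 M2]
    by (rule integrable_integral_exp_mult(2)[OF M1 M2 B1 B2 sum])
  have int: "integrable lborel f"
    by (rule integrableI_bounded[OF meas]) (use nn f_nonneg in simp)
  then show "integrable lborel (\<lambda>x. std_normal_density x * gauss_conv_ratio M1 x * gauss_conv_ratio M2 x)"
    unfolding f_def .
  have "ennreal (\<integral>x. f x \<partial>lborel) = ennreal (\<integral>a. (\<integral>b. exp (a * b) \<partial>M2) \<partial>M1)"
    using nn_integral_eq_integral[OF int] nn f_nonneg by simp
  then show "(\<integral>x. std_normal_density x * gauss_conv_ratio M1 x * gauss_conv_ratio M2 x \<partial>lborel)
       = (\<integral>a. (\<integral>b. exp (a * b) \<partial>M2) \<partial>M1)"
    unfolding f_def by (simp add: gauss_conv_ratio_nonneg)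
qed

lemma chi2_gauss_conv_le:
  assumes "0 < c" "\<And>x. c \<le> gauss_conv_ratio N2 x"
  shows "chi2 (gauss_conv_density N1) (gauss_conv_density N2)
     \<le> (\<integral>\<^sup>+x. ennreal (std_normal_density x * (gauss_conv_ratio N1 x - gauss_conv_ratio N2 x)\<^sup>2 / c) \<partial>lborel)"
proof -
  have "(gauss_conv_density N1 x - gauss_conv_density N2 x)\<^sup>2 / gauss_conv_density N2 x
      \<le> std_normal_density x * (gauss_conv_ratio N1 x - gauss_conv_ratio N2 x)\<^sup>2 / c" for x
  proof -
    have \<phi>: "0 < std_normal_density x" by (simp add: normal_density_pos)
    have R2: "0 < gauss_conv_ratio N2 x" using assms by (metis order.strict_trans2)
    have "(gauss_conv_density N1 x - gauss_conv_density N2 x)\<^sup>2 / gauss_conv_density N2 x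
        = std_normal_density x * (gauss_conv_ratio N1 x - gauss_conv_ratio N2 x)\<^sup>2 / gauss_conv_ratio N2 x"
      unfolding gauss_conv_density_eq_ratio using \<phi> R2 by (simp add: power2_eq_square field_simps)
    also have "\<dots> \<le> std_normal_density x * (gauss_conv_ratio N1 x - gauss_conv_ratio N2 x)\<^sup>2 / c"
      using assms R2 \<phi> by (intro divide_left_mono) auto
    finally show ?thesis .
  qed
  then show ?thesis
    unfolding chi2_def by (intro nn_integral_mono ennreal_leI)
qed

lemma moment_0: "prob_space M \<Longrightarrow> moment M 0 = 1"
  unfolding moment_def by (simp add: prob_space.prob_space)

text \<open>Expanding the square gives \<open>E exp (X X') + E exp (Y Y') - 2 E exp (X Y)\<close> with
  \<open>X, X' \<sim> N1\<close> and \<open>Y, Y' \<sim> N2\<close> independent; since the moments agree up to order \<open>l\<close>, the three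
  degree-\<open>l\<close> Taylor parts coincide and only the three remainders are left.\<close>
lemma integral_std_normal_ratio_diff_sq_le:
  assumes N1: "real_distribution N1" and N2: "real_distribution N2"
    and B1: "abs_moments_le N1 B" and B2: "abs_moments_le N2 B"
    and sum: "summable (\<lambda>j. B j ^ 2 / fact j)"
    and eq: "\<forall>j\<in>{1..l}. moment N1 j = moment N2 j"
  defines "D \<equiv> \<lambda>x. std_normal_density x * (gauss_conv_ratio N1 x - gauss_conv_ratio N2 x)\<^sup>2"
  shows "integrable lborel D"
    and "(\<integral>x. D x \<partial>lborel) \<le> 4 * (\<Sum>i. B (i + Suc l) ^ 2 / fact (i + Suc l))"
proof -
  note I11 = integral_std_normal_ratio_mult[OF N1 N1 B1 B1 sum]
  note I22 = integral_std_normal_ratio_mult[OF N2 N2 B2 B2 sum]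
  note I12 = integral_std_normal_ratio_mult[OF N1 N2 B1 B2 sum]
  note T11 = abs_integral_exp_mult_minus_moments_le[OF N1 N1 B1 B1 sum, of l]
  note T22 = abs_integral_exp_mult_minus_moments_le[OF N2 N2 B2 B2 sum, of l]
  note T12 = abs_integral_exp_mult_minus_moments_le[OF N1 N2 B1 B2 sum, of l]
  have expand: "D = (\<lambda>x. std_normal_density x * gauss_conv_ratio N1 x * gauss_conv_ratio N1 x
      + std_normal_density x * gauss_conv_ratio N2 x * gauss_conv_ratio N2 x
      - 2 * (std_normal_density x * gauss_conv_ratio N1 x * gauss_conv_ratio N2 x))"
    unfolding D_def by (simp add: fun_eq_iff power2_eq_square algebra_simps)
  show "integrable lborel D"
    unfolding expand using I11(1) I22(1) I12(1) by simp
  have "moment N1 j = moment N2 j" if "j \<le> l" for j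
    using eq that moment_0[OF real_distributionD(1)[OF N1]] moment_0[OF real_distributionD(1)[OF N2]]
    by (cases j) auto
  then have same_taylor:
    "(\<Sum>j\<le>l. moment N1 j * moment N1 j / fact j) = (\<Sum>j\<le>l. moment N1 j * moment N2 j / fact j)"
    "(\<Sum>j\<le>l. moment N2 j * moment N2 j / fact j) = (\<Sum>j\<le>l. moment N1 j * moment N2 j / fact j)"
    by (auto intro!: sum.cong)
  show "(\<integral>x. D x \<partial>lborel) \<le> 4 * (\<Sum>i. B (i + Suc l) ^ 2 / fact (i + Suc l))"
    unfolding expand using I11 I22 I12 T11 T22 T12 same_taylor by (simp add: abs_le_iff)
qed

lemma chi2_gauss_conv_le_moment_tail:
  assumes N1: "real_distribution N1" and N2: "real_distribution N2" and centered: "centered N2"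
    and B1: "abs_moments_le N1 B" and B2: "abs_moments_le N2 B"
    and sum: "summable (\<lambda>j. B j ^ 2 / fact j)" and var: "B 2 \<le> 8/5"
    and eq: "\<forall>j\<in>{1..l}. moment N1 j = moment N2 j"
  shows "chi2 (gauss_conv_density N1) (gauss_conv_density N2)
           \<le> ennreal (20 * (\<Sum>i. B (i + Suc l) ^ 2 / fact (i + Suc l)))"
proof -
  define D where "D x = std_normal_density x * (gauss_conv_ratio N1 x - gauss_conv_ratio N2 x)\<^sup>2" for x
  note D = integral_std_normal_ratio_diff_sq_le[OF N1 N2 B1 B2 sum eq, folded D_def]
  have "(\<integral>y. y\<^sup>2 \<partial>N2) \<le> B 2"
    using abs_moments_le_integrable(3)[OF N2 B2, of 2] by simp
  then have lower: "1/5 \<le> gauss_conv_ratio N2 x" for x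
    using gauss_conv_ratio_ge[OF N2 centered, of x] abs_moments_le_integrable(1)[OF N2 B2, of 2] var
    by simp
  have "chi2 (gauss_conv_density N1) (gauss_conv_density N2) \<le> (\<integral>\<^sup>+x. ennreal (5 * D x) \<partial>lborel)"
    using chi2_gauss_conv_le[of "1/5" N2 N1] lower by (simp add: D_def mult.commute)
  also have "\<dots> = ennreal (\<integral>x. 5 * D x \<partial>lborel)"
    using D(1) by (intro nn_integral_eq_integral) (auto simp: D_def)
  also have "\<dots> \<le> ennreal (20 * (\<Sum>i. B (i + Suc l) ^ 2 / fact (i + Suc l)))"
    using D(2) by (intro ennreal_leI) simp
  finally show ?thesis .
qed

section \<open>Subgaussian and bounded laws\<close>

lemma subgaussian_abs_moment_le_chernoff:
  assumes M: "real_distribution M" and sg: "subgaussian M \<epsilon>" and t: "0 < t"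
  shows "(\<integral>\<^sup>+x. ennreal (\<bar>x\<bar> ^ j) \<partial>M)
    \<le> ennreal ((real j / (t * exp 1)) ^ j * (2 * exp (t\<^sup>2 * \<epsilon>\<^sup>2 / 2)))"
proof -
  define c where "c = (real j / (t * exp 1)) ^ j"
  have c: "0 \<le> c" unfolding c_def using t by simp
  have int: "integrable M (\<lambda>x. exp (s * x))" and mgf: "(\<integral>x. exp (s * x) \<partial>M) \<le> exp (s\<^sup>2 * \<epsilon>\<^sup>2 / 2)"
    for s
    using sg unfolding subgaussian_def by auto
  have "\<bar>x\<bar> ^ j \<le> c * exp (t * \<bar>x\<bar>)" for x
    unfolding c_def using power_le_exp_mult[of "\<bar>x\<bar>" t j] t by simp
  also have "exp (t * \<bar>x\<bar>) \<le> exp (t * x) + exp (- t * x)" for x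
    by (cases "x \<ge> 0") auto
  finally have pointwise: "\<bar>x\<bar> ^ j \<le> c * (exp (t * x) + exp (- t * x))" for x
    using c by (meson mult_left_mono order.trans)
  have "(\<integral>\<^sup>+x. ennreal (\<bar>x\<bar> ^ j) \<partial>M) \<le> (\<integral>\<^sup>+x. ennreal (c * (exp (t * x) + exp (- t * x))) \<partial>M)"
    by (intro nn_integral_mono ennreal_leI pointwise)
  also have "\<dots> = ennreal (\<integral>x. c * (exp (t * x) + exp (- t * x)) \<partial>M)"
    using int[of t] int[of "- t"] c by (intro nn_integral_eq_integral) auto
  also have "(\<integral>x. c * (exp (t * x) + exp (- t * x)) \<partial>M)
      = c * ((\<integral>x. exp (t * x) \<partial>M) + (\<integral>x. exp (- t * x) \<partial>M))"
    using int[of t] int[of "- t"] by simp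
  also have "\<dots> \<le> c * (2 * exp (t\<^sup>2 * \<epsilon>\<^sup>2 / 2))"
    using mgf[of t] mgf[of "- t"] c by (intro mult_left_mono) auto
  finally show ?thesis
    unfolding c_def by (simp add: ennreal_leI)
qed

text \<open>Let \<open>t \<rightarrow> \<infinity>\<close> in the Chernoff bound.\<close>
lemma subgaussian_zero_abs_moment:
  assumes M: "real_distribution M" and sg: "subgaussian M 0" and j: "0 < j"
  shows "(\<integral>\<^sup>+x. ennreal (\<bar>x\<bar> ^ j) \<partial>M) = 0"
proof -
  have "(\<integral>\<^sup>+x. ennreal (\<bar>x\<bar> ^ j) \<partial>M) \<le> 0"
  proof (rule ennreal_le_epsilon)
    fix e :: real
    assume e: "0 < e"
    define u where "u = min 1 (e / 2)"
    have u: "0 < u" "u \<le> 1" "2 * u \<le> e" unfolding u_def using e by auto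
    define t where "t = real j / (exp 1 * u)"
    have t: "0 < t" "real j / (t * exp 1) = u"
      unfolding t_def using u j by (auto simp: field_simps)
    have "(\<integral>\<^sup>+x. ennreal (\<bar>x\<bar> ^ j) \<partial>M) \<le> ennreal (u ^ j * 2)"
      using subgaussian_abs_moment_le_chernoff[OF M sg t(1), of j] t(2) by simp
    also have "u ^ j * 2 \<le> e"
      using u j power_decreasing[of 1 j u] by simp
    finally show "(\<integral>\<^sup>+x. ennreal (\<bar>x\<bar> ^ j) \<partial>M) \<le> 0 + ennreal e"
      by (simp add: ennreal_leI)
  qed
  then show ?thesis by simp
qed

text \<open>Chernoff's bound with \<open>t = \<surd>j / \<epsilon>\<close> gives \<open>E |X|\<^sup>j \<le> 2 (\<epsilon> \<surd>(j/e))\<^sup>j\<close>.\<close>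
definition subgaussian_moment_bound :: "real \<Rightarrow> nat \<Rightarrow> real" where
  "subgaussian_moment_bound \<epsilon> j = 2 * (\<epsilon> * sqrt (real j / exp 1)) ^ j"

lemma abs_moments_le_subgaussian:
  assumes M: "real_distribution M" and sg: "subgaussian M \<epsilon>" and \<epsilon>: "0 \<le> \<epsilon>"
  shows "abs_moments_le M (subgaussian_moment_bound \<epsilon>)"
  unfolding abs_moments_le_def
proof (intro allI conjI)
  fix j
  show "0 \<le> subgaussian_moment_bound \<epsilon> j"
    unfolding subgaussian_moment_bound_def using \<epsilon> by simp
  consider "j = 0" | "0 < j" "\<epsilon> = 0" | "0 < j" "0 < \<epsilon>"
    using \<epsilon> by linarith
  then show "(\<integral>\<^sup>+x. ennreal (\<bar>x\<bar> ^ j) \<partial>M) \<le> ennreal (subgaussian_moment_bound \<epsilon> j)"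
  proof cases
    case 1
    then show ?thesis
      using prob_space.emeasure_space_1[OF real_distributionD(1)[OF M]]
      by (simp add: subgaussian_moment_bound_def)
  next
    case 2
    then show ?thesis using subgaussian_zero_abs_moment[OF M _ \<open>0 < j\<close>] sg by simp
  next
    case 3
    define t where "t = sqrt (real j) / \<epsilon>"
    have t: "0 < t" unfolding t_def using 3 by simp
    have "exp (t\<^sup>2 * \<epsilon>\<^sup>2 / 2) = exp (1 / 2) ^ j"
      unfolding t_def using 3 by (simp add: power_divide exp_of_nat_mult[symmetric])
    also have "exp (1 / 2) = sqrt (exp 1)"
      using real_sqrt_unique[of "exp (1 / 2)" "exp 1"] by (simp add: exp_of_nat_mult[symmetric])
    finally have "(real j / (t * exp 1)) ^ j * (2 * exp (t\<^sup>2 * \<epsilon>\<^sup>2 / 2))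
        = 2 * (real j / (t * exp 1) * sqrt (exp 1)) ^ j"
      by (simp only: power_mult_distrib mult_ac)
    also have "real j / (t * exp 1) * sqrt (exp 1) = \<epsilon> * sqrt (real j / exp 1)"
      unfolding t_def using 3 by (simp add: real_sqrt_divide field_simps)
    finally have eq: "(real j / (t * exp 1)) ^ j * (2 * exp (t\<^sup>2 * \<epsilon>\<^sup>2 / 2))
        = subgaussian_moment_bound \<epsilon> j"
      unfolding subgaussian_moment_bound_def .
    show ?thesis
      using subgaussian_abs_moment_le_chernoff[OF M sg t, of j] unfolding eq .
  qed
qed

lemma subgaussian_moment_bound_sq_over_fact:
  "subgaussian_moment_bound \<epsilon> j ^ 2 / fact j = 4 * (\<epsilon>\<^sup>2) ^ j * (real j ^ j / (exp (real j) * fact j))"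
proof -
  have swap: "(y ^ j) ^ 2 = (y ^ 2) ^ j" for y :: real
    by (simp only: power_mult[symmetric] mult.commute)
  have "(2 * (\<epsilon> * sqrt (real j / exp 1)) ^ j) ^ 2 = 4 * ((\<epsilon> * sqrt (real j / exp 1))\<^sup>2) ^ j"
    by (simp only: power_mult_distrib[of 2] swap) simp
  also have "(\<epsilon> * sqrt (real j / exp 1))\<^sup>2 = \<epsilon>\<^sup>2 * (real j / exp 1)"
    by (simp add: power_mult_distrib)
  also have "(\<epsilon>\<^sup>2 * (real j / exp 1)) ^ j = (\<epsilon>\<^sup>2) ^ j * (real j ^ j / exp (real j))"
    by (simp add: power_mult_distrib power_divide exp_of_nat_mult[symmetric])
  finally show ?thesis
    unfolding subgaussian_moment_bound_def by (simp add: field_simps)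
qed

lemma summable_subgaussian_moment_bound:
  assumes "0 \<le> \<epsilon>" "\<epsilon> < 1"
  shows "summable (\<lambda>j. subgaussian_moment_bound \<epsilon> j ^ 2 / fact j)"
proof (rule summable_comparison_test)
  show "summable (\<lambda>j. 4 * (\<epsilon>\<^sup>2) ^ j)"
    using assms by (intro summable_mult summable_geometric) (simp add: power_less_one_iff)
  have "real j ^ j / (exp (real j) * fact j) \<le> 1" for j
    using power_self_over_fact_le_exp[of j] by (simp add: field_simps)
  then have "4 * (\<epsilon>\<^sup>2) ^ j * (real j ^ j / (exp (real j) * fact j)) \<le> 4 * (\<epsilon>\<^sup>2) ^ j * 1" for j
    by (intro mult_left_mono) auto
  then have "norm (subgaussian_moment_bound \<epsilon> j ^ 2 / fact j) \<le> 4 * (\<epsilon>\<^sup>2) ^ j" for j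
    unfolding real_norm_def abs_of_nonneg[OF divide_nonneg_pos[OF zero_le_power2 fact_gt_zero]]
      subgaussian_moment_bound_sq_over_fact by simp
  then show "\<exists>N. \<forall>j\<ge>N. norm (subgaussian_moment_bound \<epsilon> j ^ 2 / fact j) \<le> 4 * (\<epsilon>\<^sup>2) ^ j"
    by simp
qed

lemma subgaussian_moment_bound_sq_over_fact_le:
  assumes "1 \<le> l" "l \<le> n"
  shows "subgaussian_moment_bound \<epsilon> n ^ 2 / fact n \<le> 4 * exp 1 / sqrt (real l) * (\<epsilon>\<^sup>2) ^ n"
proof -
  have "real n ^ n / (exp (real n) * fact n) = (real n ^ n / fact n) / exp (real n)"
    by simp
  also have "\<dots> \<le> (exp 1 * exp (real n) / sqrt (real n)) / exp (real n)"
    using assms by (intro divide_right_mono power_self_over_fact_le) auto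
  also have "\<dots> = exp 1 / sqrt (real n)"
    by simp
  also have "\<dots> \<le> exp 1 / sqrt (real l)"
    using assms by (intro divide_left_mono) auto
  finally have "4 * (\<epsilon>\<^sup>2) ^ n * (real n ^ n / (exp (real n) * fact n))
      \<le> 4 * (\<epsilon>\<^sup>2) ^ n * (exp 1 / sqrt (real l))"
    by (intro mult_left_mono) auto
  then show ?thesis
    unfolding subgaussian_moment_bound_sq_over_fact by (simp add: mult_ac)
qed

lemma subgaussian_moment_tail_le:
  assumes "0 \<le> \<epsilon>" "\<epsilon> < 1" "1 \<le> l"
  shows "(\<Sum>i. subgaussian_moment_bound \<epsilon> (i + Suc l) ^ 2 / fact (i + Suc l))
     \<le> 4 * exp 1 * (1 / sqrt (real l)) * (\<epsilon> ^ (2 * l + 2) / (1 - \<epsilon>\<^sup>2))"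
proof -
  have \<epsilon>2: "\<epsilon>\<^sup>2 < 1" using assms by (simp add: power_less_one_iff)
  define K where "K = 4 * exp 1 / sqrt (real l) * (\<epsilon>\<^sup>2) ^ Suc l"
  have "subgaussian_moment_bound \<epsilon> (i + Suc l) ^ 2 / fact (i + Suc l) \<le> K * (\<epsilon>\<^sup>2) ^ i" for i
    using subgaussian_moment_bound_sq_over_fact_le[OF assms(3), of "i + Suc l" \<epsilon>]
    unfolding K_def by (simp add: power_add mult_ac)
  moreover have "summable (\<lambda>i. subgaussian_moment_bound \<epsilon> (i + Suc l) ^ 2 / fact (i + Suc l))"
    by (rule summable_ignore_initial_segment[OF summable_subgaussian_moment_bound[OF assms(1,2)]])
  moreover have "summable (\<lambda>i. K * (\<epsilon>\<^sup>2) ^ i)"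
    using \<epsilon>2 by (intro summable_mult summable_geometric) simp
  ultimately have "(\<Sum>i. subgaussian_moment_bound \<epsilon> (i + Suc l) ^ 2 / fact (i + Suc l))
      \<le> (\<Sum>i. K * (\<epsilon>\<^sup>2) ^ i)"
    by (intro suminf_le) auto
  also have "\<dots> = K / (1 - \<epsilon>\<^sup>2)"
    using \<epsilon>2 by (simp add: suminf_mult suminf_geometric summable_geometric divide_inverse)
  also have "\<dots> = 4 * exp 1 * (1 / sqrt (real l)) * (\<epsilon> ^ (2 * l + 2) / (1 - \<epsilon>\<^sup>2))"
  proof -
    have "(\<epsilon>\<^sup>2) ^ Suc l = \<epsilon> ^ (2 * Suc l)"
      by (rule power_mult[symmetric])
    also have "2 * Suc l = 2 * l + 2"
      by simp
    finally have pow: "(\<epsilon>\<^sup>2) ^ Suc l = \<epsilon> ^ (2 * l + 2)" .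
    show ?thesis
      unfolding K_def pow by simp
  qed
  finally show ?thesis .
qed

lemma abs_moments_le_bounded_support:
  assumes M: "real_distribution M" and supp: "measure M {-\<epsilon>..\<epsilon>} = 1" and \<epsilon>: "0 \<le> \<epsilon>"
  shows "abs_moments_le M (\<lambda>j. \<epsilon> ^ j)"
  unfolding abs_moments_le_def
proof (intro allI conjI)
  fix j
  interpret prob_space M using real_distributionD[OF M] by simp
  show "0 \<le> \<epsilon> ^ j" using \<epsilon> by simp
  have "AE x in M. x \<in> {-\<epsilon>..\<epsilon>}"
    by (rule AE_prob_1[OF supp])
  then have "AE x in M. ennreal (\<bar>x\<bar> ^ j) \<le> ennreal (\<epsilon> ^ j)"
    by eventually_elim (auto intro!: ennreal_leI power_mono)
  then have "(\<integral>\<^sup>+x. ennreal (\<bar>x\<bar> ^ j) \<partial>M) \<le> (\<integral>\<^sup>+x. ennreal (\<epsilon> ^ j) \<partial>M)"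
    by (rule nn_integral_mono_AE)
  then show "(\<integral>\<^sup>+x. ennreal (\<bar>x\<bar> ^ j) \<partial>M) \<le> ennreal (\<epsilon> ^ j)"
    by (simp add: emeasure_space_1)
qed

lemma power_over_fact_le:
  fixes x :: real
  assumes "0 \<le> x" "0 < n"
  shows "x ^ n / fact n \<le> (exp 1 * x / real n) ^ n"
proof -
  have "real n ^ n / fact n \<le> exp 1 ^ n"
    using power_self_over_fact_le_exp[of n] by (simp add: exp_of_nat_mult[symmetric])
  then have "1 / fact n \<le> exp 1 ^ n / real n ^ n"
    using assms(2) by (simp add: field_simps)
  then have "x ^ n * (1 / fact n) \<le> x ^ n * (exp 1 ^ n / real n ^ n)"
    using assms by (intro mult_left_mono) auto
  then show ?thesis
    by (simp add: power_mult_distrib power_divide mult_ac)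
qed

text \<open>Consecutive terms of the tail shrink at least by the factor \<open>1/2\<close>.\<close>
lemma suminf_power_over_fact_tail_le:
  fixes x :: real
  assumes "0 \<le> x" "x \<le> 1"
  shows "(\<Sum>i. x ^ (i + Suc l) / fact (i + Suc l)) \<le> 2 * (exp 1 * x / (real l + 1)) ^ (l + 1)"
proof -
  define n where "n = Suc l"
  define q where "q = x ^ n / fact n"
  have "x ^ (i + n) / fact (i + n) \<le> q * (1/2) ^ i" for i
  proof -
    have "x ^ (i + n) \<le> x ^ n"
      using assms by (simp add: power_add mult_left_le_one_le power_le_one)
    then have "x ^ (i + n) / fact (i + n) \<le> x ^ n / fact (i + n)"
      by (rule divide_right_mono) simp
    also have "\<dots> \<le> x ^ n / (fact n * 2 ^ i)"
      using fact_mult_two_power_le[of n i] assms unfolding n_def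
      by (intro divide_left_mono) auto
    also have "\<dots> = q * (1/2) ^ i"
      unfolding q_def by (simp add: power_divide)
    finally show ?thesis .
  qed
  moreover have "summable (\<lambda>i. x ^ (i + n) / fact (i + n))"
    using summable_ignore_initial_segment[OF summable_exp[of x], of n]
    by (simp add: divide_inverse mult.commute)
  moreover have "summable (\<lambda>i. q * (1/2) ^ i)"
    by (intro summable_mult summable_geometric) simp
  ultimately have "(\<Sum>i. x ^ (i + n) / fact (i + n)) \<le> (\<Sum>i. q * (1/2) ^ i)"
    by (intro suminf_le) auto
  also have "\<dots> = 2 * q"
    by (simp add: suminf_mult suminf_geometric summable_geometric)
  also have "q \<le> (exp 1 * x / real n) ^ n"
    unfolding q_def n_def using assms(1) by (rule power_over_fact_le) simp
  finally have "(\<Sum>i. x ^ (i + n) / fact (i + n)) \<le> 2 * (exp 1 * x / real n) ^ n"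
    by (simp add: mult_left_mono)
  then show ?thesis
    unfolding n_def by (simp add: add.commute)
qed

lemma chi2_gauss_conv_subgaussian_le:
  assumes \<nu>: "real_distribution \<nu>" and \<nu>': "real_distribution \<nu>'" and centered: "centered \<nu>'"
    and l: "1 \<le> l" and eq: "\<forall>j\<in>{1..l}. moment \<nu> j = moment \<nu>' j"
    and \<epsilon>: "0 \<le> \<epsilon>" "\<epsilon> < 1" and sg: "subgaussian \<nu> \<epsilon>" "subgaussian \<nu>' \<epsilon>"
  shows "chi2 (gauss_conv_density \<nu>) (gauss_conv_density \<nu>')
    \<le> ennreal (80 * exp 1 * (1 / sqrt (real l)) * (\<epsilon> ^ (2 * l + 2) / (1 - \<epsilon>\<^sup>2)))"
proof -
  have "subgaussian_moment_bound \<epsilon> 2 = 4 * \<epsilon>\<^sup>2 / exp 1"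
    unfolding subgaussian_moment_bound_def by (simp add: power_mult_distrib)
  also have "\<dots> \<le> 4 / (5/2)"
    using \<epsilon> exp_lower_Taylor_quadratic[of 1]
    by (intro frac_le) (auto simp: power_le_one)
  finally have var: "subgaussian_moment_bound \<epsilon> 2 \<le> 8/5" by simp
  have "chi2 (gauss_conv_density \<nu>) (gauss_conv_density \<nu>')
      \<le> ennreal (20 * (\<Sum>i. subgaussian_moment_bound \<epsilon> (i + Suc l) ^ 2 / fact (i + Suc l)))"
    by (rule chi2_gauss_conv_le_moment_tail[OF \<nu> \<nu>' centered abs_moments_le_subgaussian[OF \<nu> sg(1) \<epsilon>(1)]
          abs_moments_le_subgaussian[OF \<nu>' sg(2) \<epsilon>(1)] summable_subgaussian_moment_bound[OF \<epsilon>] var eq])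
  also have "\<dots> \<le> ennreal (80 * exp 1 * (1 / sqrt (real l)) * (\<epsilon> ^ (2 * l + 2) / (1 - \<epsilon>\<^sup>2)))"
    using subgaussian_moment_tail_le[OF \<epsilon> l] by (intro ennreal_leI) simp
  finally show ?thesis .
qed

lemma chi2_gauss_conv_bounded_support_le:
  assumes \<nu>: "real_distribution \<nu>" and \<nu>': "real_distribution \<nu>'" and centered: "centered \<nu>'"
    and eq: "\<forall>j\<in>{1..l}. moment \<nu> j = moment \<nu>' j"
    and \<epsilon>: "0 \<le> \<epsilon>" "\<epsilon> \<le> 1" and supp: "measure \<nu> {-\<epsilon>..\<epsilon>} = 1" "measure \<nu>' {-\<epsilon>..\<epsilon>} = 1"
  shows "chi2 (gauss_conv_density \<nu>) (gauss_conv_density \<nu>')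
    \<le> ennreal (40 * (exp 1 * \<epsilon>\<^sup>2 / (real l + 1)) ^ (l + 1))"
proof -
  have sq: "(\<epsilon> ^ j) ^ 2 = (\<epsilon>\<^sup>2) ^ j" for j
    by (simp flip: power_mult add: mult.commute)
  have "summable (\<lambda>j. (\<epsilon> ^ j) ^ 2 / fact j)"
    unfolding sq using summable_exp[of "\<epsilon>\<^sup>2"] by (simp add: divide_inverse mult.commute)
  then have "chi2 (gauss_conv_density \<nu>) (gauss_conv_density \<nu>')
      \<le> ennreal (20 * (\<Sum>i. (\<epsilon> ^ (i + Suc l)) ^ 2 / fact (i + Suc l)))"
    using \<epsilon> power_le_one[OF \<epsilon>, of 2]
    by (intro chi2_gauss_conv_le_moment_tail[OF \<nu> \<nu>' centered
          abs_moments_le_bounded_support[OF \<nu> supp(1)] abs_moments_le_bounded_support[OF \<nu>' supp(2)]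
          _ _ eq]) auto
  also have "\<dots> \<le> ennreal (40 * (exp 1 * \<epsilon>\<^sup>2 / (real l + 1)) ^ (l + 1))"
    unfolding sq using suminf_power_over_fact_tail_le[of "\<epsilon>\<^sup>2" l] power_le_one[OF \<epsilon>, of 2]
    by (intro ennreal_leI) simp
  finally show ?thesis .
qed

theorem lemma8:
  "\<exists>C>0. \<forall>(\<nu>::real measure) (\<nu>'::real measure) (l::nat) (\<epsilon>::real).
     real_distribution \<nu> \<and> real_distribution \<nu>' \<and> centered \<nu> \<and> centered \<nu>' \<and>
     l \<ge> 1 \<and> (\<forall>j\<in>{1..l}. moment \<nu> j = moment \<nu>' j) \<and> 0 \<le> \<epsilon> \<and> \<epsilon> < 1 \<longrightarrow>
       (subgaussian \<nu> \<epsilon> \<and> subgaussian \<nu>' \<epsilon> \<longrightarrow>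
          chi2 (gauss_conv_density \<nu>) (gauss_conv_density \<nu>')
            \<le> ennreal (C * (1 / sqrt (real l)) * (\<epsilon> ^ (2 * l + 2) / (1 - \<epsilon>\<^sup>2)))) \<and>
       (measure \<nu> {-\<epsilon>..\<epsilon>} = 1 \<and> measure \<nu>' {-\<epsilon>..\<epsilon>} = 1 \<longrightarrow>
          chi2 (gauss_conv_density \<nu>) (gauss_conv_density \<nu>')
            \<le> ennreal (C * (exp 1 * \<epsilon>\<^sup>2 / (real l + 1)) ^ (l + 1)))"
proof (intro exI[of _ "80 * exp 1"] conjI allI impI)
  fix \<nu> \<nu>' :: "real measure" and l :: nat and \<epsilon> :: real
  assume H: "real_distribution \<nu> \<and> real_distribution \<nu>' \<and> centered \<nu> \<and> centered \<nu>' \<and>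
     l \<ge> 1 \<and> (\<forall>j\<in>{1..l}. moment \<nu> j = moment \<nu>' j) \<and> 0 \<le> \<epsilon> \<and> \<epsilon> < 1"
  then show "subgaussian \<nu> \<epsilon> \<and> subgaussian \<nu>' \<epsilon> \<Longrightarrow> chi2 (gauss_conv_density \<nu>) (gauss_conv_density \<nu>')
      \<le> ennreal (80 * exp 1 * (1 / sqrt (real l)) * (\<epsilon> ^ (2 * l + 2) / (1 - \<epsilon>\<^sup>2)))"
    using chi2_gauss_conv_subgaussian_le[of \<nu> \<nu>' l \<epsilon>] by blast
  assume "measure \<nu> {-\<epsilon>..\<epsilon>} = 1 \<and> measure \<nu>' {-\<epsilon>..\<epsilon>} = 1"
  then have "chi2 (gauss_conv_density \<nu>) (gauss_conv_density \<nu>')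
      \<le> ennreal (40 * (exp 1 * \<epsilon>\<^sup>2 / (real l + 1)) ^ (l + 1))"
    using H chi2_gauss_conv_bounded_support_le[of \<nu> \<nu>' l \<epsilon>] by simp
  also have "\<dots> \<le> ennreal (80 * exp 1 * (exp 1 * \<epsilon>\<^sup>2 / (real l + 1)) ^ (l + 1))"
    using exp_lower_Taylor_quadratic[of 1] by (intro ennreal_leI mult_right_mono) auto
  finally show "chi2 (gauss_conv_density \<nu>) (gauss_conv_density \<nu>')
      \<le> ennreal (80 * exp 1 * (exp 1 * \<epsilon>\<^sup>2 / (real l + 1)) ^ (l + 1))" .
qed simp

end
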